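(* Let $H_0$ be an admissible Hamiltonian, $H_1(x)=\tfrac12x^TA\mathcal Hx$ (so $\nabla H_1=A\nabla H_0$), $f_0=J\nabla H_0$ and $f_1=J\nabla H_1$ (so $f_1=A^Tf_0$). Then for all $x$: $$f_0'(x)f_1(x)=f_1'(x)f_0(x),\qquad f_0'(x)f_1'(x)=f_1'(x)f_0'(x).$$
   Context: Fix an integer $n\ge 2$. Points of $\mathbb R^{2n}$ are $x=(x_1,\dots,x_{2n})^{T}$; write $u=(x_1,\dots,x_n)^T$. Let $X(u)$ be the $n\times n$ matrix with entries $X(u)_{ij}=x_{k}$ where $k\in\{1,\dots,n\}$, $k\equiv i+j-1 \pmod n$, and let $J(x)=\begin{pmatrix}0&X(u)\\-X(u)&0\end{pmatrix}$. Let $\mathcal P$ be the $n\times n$ cyclic shift matrix ($\mathcal P_{i,i+1}=1$ for $1\le i\le n-1$, $\mathcal P_{n,1}=1$, all other entries $0$) and $A=\begin{pmatrix}\mathcal P&0\\0&\mathcal P\end{pmatrix}$. An admissible Hamiltonian is a homogeneous quadratic form $H(x)=\tfrac12 x^T\mathcal H x$ with a constant symmetric matrix $\mathcal H=\nabla^2H$ satisfying $A\mathcal H=\mathcal H A^T$; $f'(x)$ denotes the Jacobi matrix of a vector field $f$. *)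

theory Defs
  imports "HOL-Analysis.Analysis"
begin

text \<open>Conventions: indices are 0-based. A point of R^(2n) is a function
  x :: nat \<Rightarrow> real whose relevant components are x 0, ..., x (2n-1)
  (paper's x_(k+1) is x k). Matrices are functions nat \<Rightarrow> nat \<Rightarrow> real,
  relevant entries with indices < n (resp. < 2n).\<close>

definition matmul :: "nat \<Rightarrow> (nat \<Rightarrow> nat \<Rightarrow> real) \<Rightarrow> (nat \<Rightarrow> nat \<Rightarrow> real) \<Rightarrow> (nat \<Rightarrow> nat \<Rightarrow> real)" where
  "matmul m M N = (\<lambda>i k. \<Sum>j<m. M i j * N j k)"

definition matvec :: "nat \<Rightarrow> (nat \<Rightarrow> nat \<Rightarrow> real) \<Rightarrow> (nat \<Rightarrow> real) \<Rightarrow> (nat \<Rightarrow> real)" where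
  "matvec m M v = (\<lambda>i. \<Sum>j<m. M i j * v j)"

definition transp :: "(nat \<Rightarrow> nat \<Rightarrow> real) \<Rightarrow> (nat \<Rightarrow> nat \<Rightarrow> real)" where
  "transp M = (\<lambda>i j. M j i)"

text \<open>X(u)_{ij} = x_k with k = i+j-1 mod n (1-based), i.e. 0-based index (i+j) mod n.\<close>
definition Xmat :: "nat \<Rightarrow> (nat \<Rightarrow> real) \<Rightarrow> (nat \<Rightarrow> nat \<Rightarrow> real)" where
  "Xmat n x = (\<lambda>i j. x ((i + j) mod n))"

definition Jmat :: "nat \<Rightarrow> (nat \<Rightarrow> real) \<Rightarrow> (nat \<Rightarrow> nat \<Rightarrow> real)" where
  "Jmat n x = (\<lambda>i j.
     if i < n \<and> n \<le> j \<and> j < 2*n then Xmat n x i (j - n)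
     else if n \<le> i \<and> i < 2*n \<and> j < n then - Xmat n x (i - n) j
     else 0)"

definition Pmat :: "nat \<Rightarrow> (nat \<Rightarrow> nat \<Rightarrow> real)" where
  "Pmat n = (\<lambda>i j. if i < n \<and> j < n \<and> j = (i + 1) mod n then 1 else 0)"

definition Amat :: "nat \<Rightarrow> (nat \<Rightarrow> nat \<Rightarrow> real)" where
  "Amat n = (\<lambda>i j.
     if i < n \<and> j < n then Pmat n i j
     else if n \<le> i \<and> i < 2*n \<and> n \<le> j \<and> j < 2*n then Pmat n (i - n) (j - n)
     else 0)"

definition admissible :: "nat \<Rightarrow> (nat \<Rightarrow> nat \<Rightarrow> real) \<Rightarrow> bool" where
  "admissible n HH \<longleftrightarrow>
     (\<forall>i<2*n. \<forall>j<2*n. HH i j = HH j i) \<and>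
     (\<forall>i<2*n. \<forall>j<2*n. matmul (2*n) (Amat n) HH i j = matmul (2*n) HH (transp (Amat n)) i j)"

definition quadH :: "nat \<Rightarrow> (nat \<Rightarrow> nat \<Rightarrow> real) \<Rightarrow> (nat \<Rightarrow> real) \<Rightarrow> real" where
  "quadH m M x = (1/2) * (\<Sum>i<m. \<Sum>j<m. x i * M i j * x j)"

definition pderiv :: "((nat \<Rightarrow> real) \<Rightarrow> real) \<Rightarrow> nat \<Rightarrow> (nat \<Rightarrow> real) \<Rightarrow> real" where
  "pderiv g j x = deriv (\<lambda>t. g (x(j := t))) (x j)"

definition grad :: "((nat \<Rightarrow> real) \<Rightarrow> real) \<Rightarrow> (nat \<Rightarrow> real) \<Rightarrow> (nat \<Rightarrow> real)" where
  "grad g x = (\<lambda>j. pderiv g j x)"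

definition jacobi :: "((nat \<Rightarrow> real) \<Rightarrow> (nat \<Rightarrow> real)) \<Rightarrow> (nat \<Rightarrow> real) \<Rightarrow> (nat \<Rightarrow> nat \<Rightarrow> real)" where
  "jacobi f x = (\<lambda>i j. pderiv (\<lambda>y. f y i) j x)"

definition hamfield :: "nat \<Rightarrow> ((nat \<Rightarrow> real) \<Rightarrow> real) \<Rightarrow> (nat \<Rightarrow> real) \<Rightarrow> (nat \<Rightarrow> real)" where
  "hamfield n H x = matvec (2*n) (Jmat n x) (grad H x)"

end

theory Submission imports Defs begin

text \<open>Write S for the symmetric Hessian of H0. Since J(x) is linear in x, the field
  f0(x) = J(x) S x has Jacobian f0'(x) w = J(w) S x + J(x) S w, and likewise for f1 with A S in
  place of S. The cyclic structure of X(u) gives J(x) A = A^T J(x) and J(A^T w) = A^T J(w);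
  together with A S = S A^T this yields f1 = A^T f0, f1' = A^T f0' and f0' A^T = A^T f0'. Hence
  f0' f1 = f0' A^T f0 = A^T f0' f0 = f1' f0, and in the same way f0' f1' = f1' f0'.\<close>

definition symmetric_mat :: "nat \<Rightarrow> (nat \<Rightarrow> nat \<Rightarrow> real) \<Rightarrow> bool" where
  "symmetric_mat m M \<longleftrightarrow> (\<forall>i<m. \<forall>j<m. M i j = M j i)"

lemma sum_indicator_mult:
  assumes "a < (m::nat)"
  shows "(\<Sum>j<m. (if a = j then 1 else 0) * w j) = (w a :: 'a::semiring_1)"
proof -
  have "(\<Sum>j<m. (if a = j then 1 else 0) * w j) = (\<Sum>j<m. if a = j then w a else 0)"
    by (rule sum.cong) auto
  also have "\<dots> = w a" using assms by (simp add: sum.delta)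
  finally show ?thesis .
qed

lemma sum_unit_row:
  assumes "t < (m::nat)" and "\<And>j. j < m \<Longrightarrow> M j = (if t = j then 1 else 0)"
  shows "(\<Sum>j<m. M j * v j) = (v t :: 'a::semiring_1)"
proof -
  have "(\<Sum>j<m. M j * v j) = (\<Sum>j<m. (if t = j then 1 else 0) * v j)"
    using assms(2) by (intro sum.cong) simp_all
  also have "\<dots> = v t" using sum_indicator_mult[OF assms(1)] .
  finally show ?thesis .
qed

lemma matvec_matmul: "matvec m M (matvec m N w) i = matvec m (matmul m M N) w i"
proof -
  have "matvec m M (matvec m N w) i = (\<Sum>j<m. \<Sum>l<m. M i j * N j l * w l)"
    unfolding matvec_def by (simp add: sum_distrib_left mult.assoc)
  also have "\<dots> = (\<Sum>l<m. \<Sum>j<m. M i j * N j l * w l)" by (rule sum.swap)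
  finally show ?thesis
    unfolding matvec_def matmul_def by (simp add: sum_distrib_right)
qed

lemma matvec_cong: "(\<And>j. j < m \<Longrightarrow> v j = v' j) \<Longrightarrow> matvec m M v i = matvec m M v' i"
  unfolding matvec_def by (auto intro!: sum.cong)

lemma matvec_add: "matvec m M (\<lambda>j. a j + b j) i = matvec m M a i + matvec m M b i"
  unfolding matvec_def by (simp add: algebra_simps sum.distrib)

lemma matmul_eq_matvec_column: "matmul m P Q i k = matvec m P (\<lambda>j. Q j k) i"
  unfolding matmul_def matvec_def ..

lemma matvec_unit_vector: "k < m \<Longrightarrow> matvec m M (\<lambda>l. if l = k then 1 else 0) j = M j k"
  unfolding matvec_def using sum_indicator_mult[of k m "M j"] by (simp add: mult.commute eq_commute)

lemma has_field_derivative_fun_upd: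
  "((\<lambda>t. (x(j := t)) a) has_field_derivative (if a = j then 1 else 0)) (at s)"
  by (cases "a = j") (auto intro!: derivative_eq_intros)

lemma pderiv_sum_quadratic_monomials:
  assumes "finite I" "finite K"
  shows "pderiv (\<lambda>y. \<Sum>i\<in>I. \<Sum>k\<in>K. c i k * y (a i k) * y (b i k)) j x =
    (\<Sum>i\<in>I. \<Sum>k\<in>K. c i k * ((if a i k = j then 1 else 0) * x (b i k)
                              + x (a i k) * (if b i k = j then 1 else 0)))"
proof -
  have "((\<lambda>t. \<Sum>i\<in>I. \<Sum>k\<in>K. c i k * (x(j:=t)) (a i k) * (x(j:=t)) (b i k)) has_field_derivative
     (\<Sum>i\<in>I. \<Sum>k\<in>K. c i k * ((if a i k = j then 1 else 0) * (x(j:=s)) (b i k)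
                              + (x(j:=s)) (a i k) * (if b i k = j then 1 else 0)))) (at s)" for s
    by (intro DERIV_sum, rule DERIV_cong,
        rule DERIV_mult[OF DERIV_cmult[OF has_field_derivative_fun_upd] has_field_derivative_fun_upd])
       (simp add: algebra_simps)
  from this[of "x j"] show ?thesis
    unfolding pderiv_def by (intro DERIV_imp_deriv) simp
qed

lemma grad_quadH:
  assumes "symmetric_mat m M" and "k < m"
  shows "grad (quadH m M) y k = matvec m M y k"
proof -
  have "quadH m M = (\<lambda>y. \<Sum>i<m. \<Sum>j<m. (M i j / 2) * y i * y j)"
    unfolding quadH_def by (auto simp: sum_distrib_left intro!: ext sum.cong)
  then have "grad (quadH m M) y k =
      (\<Sum>i<m. \<Sum>j<m. M i j / 2 * ((if i = k then 1 else 0) * y j + y i * (if j = k then 1 else 0)))"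
    unfolding grad_def by (simp only:) (rule pderiv_sum_quadratic_monomials; simp)
  also have "\<dots> = (\<Sum>i<m. \<Sum>j<m. if i = k then M i j / 2 * y j else 0)
                 + (\<Sum>i<m. \<Sum>j<m. if j = k then M i j / 2 * y i else 0)"
    unfolding sum.distrib[symmetric] by (intro sum.cong refl) (simp add: algebra_simps)
  also have "\<dots> = (\<Sum>j<m. M k j / 2 * y j) + (\<Sum>i<m. M i k / 2 * y i)"
    using \<open>k < m\<close> by (simp add: sum.delta' sum.swap[of _ "{..<m}" "{..<m}"] if_distrib cong: if_cong)
  also have "(\<Sum>i<m. M i k / 2 * y i) = (\<Sum>j<m. M k j / 2 * y j)"
    using assms by (intro sum.cong) (auto simp: symmetric_mat_def)
  finally show ?thesis
    unfolding matvec_def by (simp add: sum.distrib[symmetric] mult.commute)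
qed

lemma hamfield_quadH:
  assumes "symmetric_mat (2*n) M"
  shows "hamfield n (quadH (2*n) M) y i = matvec (2*n) (Jmat n y) (matvec (2*n) M y) i"
  unfolding hamfield_def using grad_quadH[OF assms] by (auto intro: matvec_cong)

text \<open>Every entry of J(y) is a signed coordinate of y; this makes the field a sum of quadratic monomials.\<close>

definition Jsign :: "nat \<Rightarrow> nat \<Rightarrow> nat \<Rightarrow> real" where
  "Jsign n i k = (if i < n \<and> n \<le> k \<and> k < 2*n then 1 else if n \<le> i \<and> i < 2*n \<and> k < n then -1 else 0)"

definition Jindex :: "nat \<Rightarrow> nat \<Rightarrow> nat \<Rightarrow> nat" where
  "Jindex n i k = (if i < n \<and> n \<le> k \<and> k < 2*n then (i + (k - n)) mod n else (i - n + k) mod n)"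

lemma Jmat_eq_Jsign: "Jmat n y i k = Jsign n i k * y (Jindex n i k)"
  unfolding Jmat_def Xmat_def Jsign_def Jindex_def by auto

lemma Jindex_less: "0 < n \<Longrightarrow> Jindex n i k < n"
  unfolding Jindex_def by auto

lemma hamfield_quadH_monomials:
  assumes "symmetric_mat (2*n) M"
  shows "(\<lambda>y. hamfield n (quadH (2*n) M) y i)
       = (\<lambda>y. \<Sum>k<2*n. \<Sum>l<2*n. (Jsign n i k * M k l) * y (Jindex n i k) * y l)"
  unfolding hamfield_quadH[OF assms] matvec_def Jmat_eq_Jsign
  by (auto simp: sum_distrib_left algebra_simps intro!: ext sum.cong)

lemma jacobi_hamfield_quadH:
  assumes "symmetric_mat (2*n) M" and "0 < n"
  shows "matvec (2*n) (jacobi (hamfield n (quadH (2*n) M)) x) w i =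
    matvec (2*n) (Jmat n w) (matvec (2*n) M x) i + matvec (2*n) (Jmat n x) (matvec (2*n) M w) i"
proof -
  let ?c = "\<lambda>k l. Jsign n i k * M k l" and ?a = "Jindex n i"
  let ?d = "\<lambda>k l j. (if ?a k = j then 1 else 0) * x l + x (?a k) * (if l = j then 1 else 0)"
  have a: "?a k < 2*n" for k using Jindex_less[OF \<open>0 < n\<close>, of i k] by linarith
  have "matvec (2*n) (jacobi (hamfield n (quadH (2*n) M)) x) w i =
     (\<Sum>j<2*n. \<Sum>k<2*n. \<Sum>l<2*n. ?c k l * ?d k l j * w j)"
    unfolding matvec_def jacobi_def hamfield_quadH_monomials[OF assms(1)]
    by (simp add: pderiv_sum_quadratic_monomials sum_distrib_right)
  also have "\<dots> = (\<Sum>k<2*n. \<Sum>l<2*n. \<Sum>j<2*n. ?c k l * ?d k l j * w j)"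
    by (subst sum.swap, rule sum.cong[OF refl], rule sum.swap)
  also have "\<dots> = (\<Sum>k<2*n. \<Sum>l<2*n. ?c k l * (x l * w (?a k) + x (?a k) * w l))"
  proof (intro sum.cong refl)
    fix k l assume "l \<in> {..<2*n}"
    then have "(\<Sum>j<2*n. ?c k l * ?d k l j * w j) = ?c k l *
        (x l * (\<Sum>j<2*n. (if ?a k = j then 1 else 0) * w j) + x (?a k) * (\<Sum>j<2*n. (if l = j then 1 else 0) * w j))"
      by (simp add: sum_distrib_left sum.distrib algebra_simps)
    then show "(\<Sum>j<2*n. ?c k l * ?d k l j * w j) = ?c k l * (x l * w (?a k) + x (?a k) * w l)"
      using sum_indicator_mult[OF a, where w=w] sum_indicator_mult[of l "2*n" w] \<open>l \<in> {..<2*n}\<close> by simp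
  qed
  finally show ?thesis
    unfolding matvec_def Jmat_eq_Jsign
    by (simp add: sum_distrib_left sum.distrib[symmetric] algebra_simps)
qed

lemma sum_lessThan_double: "(\<Sum>j<2*n. f j) = (\<Sum>k<n. f k) + (\<Sum>k<n. f (n + k::nat))"
proof -
  have "(\<Sum>j<2*n. f j) = (\<Sum>k<n. f k) + (\<Sum>j=n..<n+n. f j)"
    by (simp add: mult_2 lessThan_atLeast0 sum.atLeastLessThan_concat)
  also have "(\<Sum>j=n..<n+n. f j) = (\<Sum>k<n. f (n + k))"
    using sum.shift_bounds_nat_ivl[of f 0 n n] by (simp add: lessThan_atLeast0 add.commute)
  finally show ?thesis .
qed

lemma sum_rotate_mod:
  assumes "0 < (n::nat)"
  shows "(\<Sum>k<n. g ((k + 1) mod n)) = (\<Sum>k<n. g k)"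
proof -
  obtain m where n: "n = Suc m" using assms gr0_implies_Suc by blast
  have "(\<Sum>k<m. g ((k + 1) mod Suc m)) = (\<Sum>k<m. g (Suc k))"
    by (rule sum.cong) auto
  then have "(\<Sum>k<Suc m. g ((k + 1) mod Suc m)) = (\<Sum>k<m. g (Suc k)) + g 0"
    by (simp add: sum.lessThan_Suc)
  also have "\<dots> = (\<Sum>k<Suc m. g k)"
    by (subst sum.lessThan_Suc_shift) (simp add: add.commute)
  finally show ?thesis using n by simp
qed

lemma succ_mod_eq_iff_pred_mod:
  assumes "i < n" "j < (n::nat)"
  shows "i = (j + 1) mod n \<longleftrightarrow> j = (i + (n - 1)) mod n"
proof
  assume "i = (j + 1) mod n"
  then have "(i + (n - 1)) mod n = (j + 1 + (n - 1)) mod n" by (simp add: mod_add_left_eq)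
  also have "j + 1 + (n - 1) = j + n" using assms by simp
  finally show "j = (i + (n - 1)) mod n" using assms by simp
next
  assume "j = (i + (n - 1)) mod n"
  then have "(j + 1) mod n = (i + (n - 1) + 1) mod n" by (simp only: mod_add_left_eq)
  also have "i + (n - 1) + 1 = i + n" using assms by simp
  finally show "i = (j + 1) mod n" using assms by simp
qed

lemma pred_mod_add_succ_mod:
  assumes "0 < (n::nat)"
  shows "((i + (n - 1)) mod n + (k + 1) mod n) mod n = (i + k) mod n"
proof -
  have "((i + (n - 1)) mod n + (k + 1) mod n) mod n = (i + (n - 1) + (k + 1)) mod n"
    by (simp add: mod_add_eq)
  also have "i + (n - 1) + (k + 1) = (i + k) + n" using assms by simp
  finally show ?thesis by simp
qed

context
  fixes n :: nat
  assumes n: "0 < n"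
begin

lemma mod_less_double: "a mod n < 2*n"
  using mod_less_divisor[OF n, of a] by linarith

lemma Amat_matvec_lower: "i < n \<Longrightarrow> matvec (2*n) (Amat n) v i = v ((i + 1) mod n)"
  unfolding matvec_def
  by (rule sum_unit_row) (use n mod_less_double in \<open>auto simp: Amat_def Pmat_def\<close>)

lemma Amat_matvec_upper: "n \<le> i \<Longrightarrow> i < 2*n \<Longrightarrow> matvec (2*n) (Amat n) v i = v (n + (i - n + 1) mod n)"
  unfolding matvec_def
  by (rule sum_unit_row) (use n in \<open>auto simp: Amat_def Pmat_def\<close>)

lemma transp_Amat_matvec_lower:
  assumes i: "i < n"
  shows "matvec (2*n) (transp (Amat n)) v i = v ((i + (n - 1)) mod n)"
  unfolding matvec_def transp_def
proof (rule sum_unit_row)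
  show "(i + (n - 1)) mod n < 2 * n" by (rule mod_less_double)
  fix j assume "j < 2*n"
  then show "Amat n j i = (if (i + (n - 1)) mod n = j then 1 else 0)"
    using succ_mod_eq_iff_pred_mod[OF i, of j] i mod_less_divisor[OF n, of "i + (n - 1)"]
    by (auto simp: Amat_def Pmat_def)
qed

lemma transp_Amat_matvec_upper:
  assumes i: "n \<le> i" "i < 2*n"
  shows "matvec (2*n) (transp (Amat n)) v i = v (n + (i - n + (n - 1)) mod n)"
  unfolding matvec_def transp_def
proof (rule sum_unit_row)
  show "n + (i - n + (n - 1)) mod n < 2 * n" using mod_less_divisor[OF n, of "i - n + (n - 1)"] by linarith
  fix j assume j: "j < 2*n"
  have "i - n < n" using i by linarith
  show "Amat n j i = (if n + (i - n + (n - 1)) mod n = j then 1 else 0)"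
  proof (cases "j < n")
    case False
    then have "j - n < n" using j by linarith
    with False i j succ_mod_eq_iff_pred_mod[OF \<open>i - n < n\<close> this] show ?thesis
      by (auto simp: Amat_def Pmat_def)
  qed (use i in \<open>auto simp: Amat_def Pmat_def\<close>)
qed

lemma Jmat_matvec_lower: "i < n \<Longrightarrow> matvec (2*n) (Jmat n x) v i = (\<Sum>k<n. x ((i + k) mod n) * v (n + k))"
  unfolding matvec_def sum_lessThan_double by (simp add: Jmat_def Xmat_def)

lemma Jmat_matvec_upper:
  "n \<le> i \<Longrightarrow> i < 2*n \<Longrightarrow> matvec (2*n) (Jmat n x) v i = - (\<Sum>k<n. x ((i - n + k) mod n) * v k)"
  unfolding matvec_def sum_lessThan_double by (simp add: Jmat_def Xmat_def sum_negf)

lemma Jmat_Amat_commute: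
  assumes i: "i < 2*n"
  shows "matvec (2*n) (Jmat n x) (matvec (2*n) (Amat n) v) i
       = matvec (2*n) (transp (Amat n)) (matvec (2*n) (Jmat n x) v) i"
proof (cases "i < n")
  case True
  let ?g = "\<lambda>k. x (((i + (n - 1)) mod n + k) mod n) * v (n + k)"
  have "matvec (2*n) (Jmat n x) (matvec (2*n) (Amat n) v) i
      = (\<Sum>k<n. x ((i + k) mod n) * v (n + (k + 1) mod n))"
    using Jmat_matvec_lower[OF True] Amat_matvec_upper by simp
  also have "\<dots> = (\<Sum>k<n. ?g ((k + 1) mod n))"
    by (simp only: pred_mod_add_succ_mod[OF n])
  also have "\<dots> = (\<Sum>k<n. ?g k)" by (rule sum_rotate_mod[OF n])
  finally show ?thesis
    using transp_Amat_matvec_lower[OF True] Jmat_matvec_lower mod_less_divisor[OF n] by simp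
next
  case False
  let ?g = "\<lambda>k. x (((i - n + (n - 1)) mod n + k) mod n) * v k"
  have "matvec (2*n) (Jmat n x) (matvec (2*n) (Amat n) v) i
      = - (\<Sum>k<n. x ((i - n + k) mod n) * v ((k + 1) mod n))"
    using Jmat_matvec_upper[OF _ i] False Amat_matvec_lower by simp
  also have "\<dots> = - (\<Sum>k<n. ?g ((k + 1) mod n))"
    by (simp only: pred_mod_add_succ_mod[OF n])
  also have "\<dots> = - (\<Sum>k<n. ?g k)" using sum_rotate_mod[OF n, of ?g] by simp
  finally show ?thesis
    using transp_Amat_matvec_upper[OF _ i] False Jmat_matvec_upper mod_less_divisor[OF n] by simp
qed

lemma Jmat_transp_Amat:
  assumes i: "i < 2*n"
  shows "matvec (2*n) (Jmat n (matvec (2*n) (transp (Amat n)) w)) v i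
       = matvec (2*n) (transp (Amat n)) (matvec (2*n) (Jmat n w) v) i"
proof (cases "i < n")
  case True
  have "matvec (2*n) (Jmat n (matvec (2*n) (transp (Amat n)) w)) v i
      = (\<Sum>k<n. w (((i + k) mod n + (n - 1)) mod n) * v (n + k))"
    using Jmat_matvec_lower[OF True] transp_Amat_matvec_lower mod_less_divisor[OF n] by simp
  also have "\<dots> = (\<Sum>k<n. w (((i + (n - 1)) mod n + k) mod n) * v (n + k))"
    by (simp only: mod_add_left_eq mod_add_right_eq add_ac)
  finally show ?thesis
    using transp_Amat_matvec_lower[OF True] Jmat_matvec_lower mod_less_divisor[OF n] by simp
next
  case False
  have "matvec (2*n) (Jmat n (matvec (2*n) (transp (Amat n)) w)) v i
      = - (\<Sum>k<n. w (((i - n + k) mod n + (n - 1)) mod n) * v k)"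
    using Jmat_matvec_upper[OF _ i] False transp_Amat_matvec_lower mod_less_divisor[OF n] by simp
  also have "\<dots> = - (\<Sum>k<n. w (((i - n + (n - 1)) mod n + k) mod n) * v k)"
    by (simp only: mod_add_left_eq mod_add_right_eq add_ac)
  finally show ?thesis
    using transp_Amat_matvec_upper[OF _ i] False Jmat_matvec_upper mod_less_divisor[OF n] by simp
qed

end

lemma admissible_symmetric: "admissible n HH \<Longrightarrow> symmetric_mat (2*n) HH"
  unfolding admissible_def symmetric_mat_def by blast

lemma admissible_matvec_transp_Amat:
  assumes "admissible n HH" and "j < 2*n"
  shows "matvec (2*n) HH (matvec (2*n) (transp (Amat n)) w) j
       = matvec (2*n) (Amat n) (matvec (2*n) HH w) j"
proof -
  have "matvec (2*n) HH (matvec (2*n) (transp (Amat n)) w) j = matvec (2*n) (matmul (2*n) HH (transp (Amat n))) w j"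
    by (rule matvec_matmul)
  also have "\<dots> = matvec (2*n) (matmul (2*n) (Amat n) HH) w j"
    using assms unfolding admissible_def matvec_def by (auto intro!: sum.cong)
  finally show ?thesis by (simp only: matvec_matmul)
qed

lemma admissible_symmetric_shift:
  assumes "admissible n HH"
  shows "symmetric_mat (2*n) (matmul (2*n) (Amat n) HH)"
  unfolding symmetric_mat_def
proof (intro allI impI)
  fix i j assume ij: "i < 2*n" "j < 2*n"
  have "matmul (2*n) (Amat n) HH i j = matmul (2*n) HH (transp (Amat n)) i j"
    using assms ij unfolding admissible_def by blast
  also have "\<dots> = matmul (2*n) (Amat n) HH j i"
    using admissible_symmetric[OF assms] ij unfolding matmul_def transp_def symmetric_mat_def
    by (auto intro!: sum.cong simp: mult.commute)
  finally show "matmul (2*n) (Amat n) HH i j = matmul (2*n) (Amat n) HH j i" .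
qed

lemma hamfield_shift:
  assumes "admissible n HH" and "0 < n" and "i < 2*n"
  shows "hamfield n (quadH (2*n) (matmul (2*n) (Amat n) HH)) y i
       = matvec (2*n) (transp (Amat n)) (hamfield n (quadH (2*n) HH) y) i"
proof -
  have "hamfield n (quadH (2*n) (matmul (2*n) (Amat n) HH)) y i
      = matvec (2*n) (Jmat n y) (matvec (2*n) (Amat n) (matvec (2*n) HH y)) i"
    unfolding hamfield_quadH[OF admissible_symmetric_shift[OF assms(1)]]
    by (intro matvec_cong matvec_matmul[symmetric])
  also have "\<dots> = matvec (2*n) (transp (Amat n)) (matvec (2*n) (Jmat n y) (matvec (2*n) HH y)) i"
    by (rule Jmat_Amat_commute[OF assms(2,3)])
  also have "\<dots> = matvec (2*n) (transp (Amat n)) (hamfield n (quadH (2*n) HH) y) i"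
    by (intro matvec_cong) (simp add: hamfield_quadH[OF admissible_symmetric[OF assms(1)]])
  finally show ?thesis .
qed

lemma jacobi_hamfield_shift:
  assumes "admissible n HH" and "0 < n" and "i < 2*n"
  shows "matvec (2*n) (jacobi (hamfield n (quadH (2*n) (matmul (2*n) (Amat n) HH))) x) w i
       = matvec (2*n) (transp (Amat n)) (matvec (2*n) (jacobi (hamfield n (quadH (2*n) HH)) x) w) i"
proof -
  have "matvec (2*n) (jacobi (hamfield n (quadH (2*n) (matmul (2*n) (Amat n) HH))) x) w i
      = matvec (2*n) (Jmat n w) (matvec (2*n) (Amat n) (matvec (2*n) HH x)) i
      + matvec (2*n) (Jmat n x) (matvec (2*n) (Amat n) (matvec (2*n) HH w)) i"
    unfolding jacobi_hamfield_quadH[OF admissible_symmetric_shift[OF assms(1)] assms(2)]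
    by (intro arg_cong2[where f="(+)"] matvec_cong matvec_matmul[symmetric])
  also have "\<dots> = matvec (2*n) (transp (Amat n)) (matvec (2*n) (Jmat n w) (matvec (2*n) HH x)) i
      + matvec (2*n) (transp (Amat n)) (matvec (2*n) (Jmat n x) (matvec (2*n) HH w)) i"
    by (simp only: Jmat_Amat_commute[OF assms(2,3)])
  also have "\<dots> = matvec (2*n) (transp (Amat n)) (matvec (2*n) (jacobi (hamfield n (quadH (2*n) HH)) x) w) i"
    unfolding matvec_add[symmetric]
    by (intro matvec_cong) (simp add: jacobi_hamfield_quadH[OF admissible_symmetric[OF assms(1)] assms(2)])
  finally show ?thesis .
qed

lemma jacobi_hamfield_transp_Amat:
  assumes "admissible n HH" and "0 < n" and "i < 2*n"
  shows "matvec (2*n) (jacobi (hamfield n (quadH (2*n) HH)) x) (matvec (2*n) (transp (Amat n)) w) i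
       = matvec (2*n) (transp (Amat n)) (matvec (2*n) (jacobi (hamfield n (quadH (2*n) HH)) x) w) i"
proof -
  have "matvec (2*n) (jacobi (hamfield n (quadH (2*n) HH)) x) (matvec (2*n) (transp (Amat n)) w) i
      = matvec (2*n) (Jmat n (matvec (2*n) (transp (Amat n)) w)) (matvec (2*n) HH x) i
      + matvec (2*n) (Jmat n x) (matvec (2*n) (Amat n) (matvec (2*n) HH w)) i"
    unfolding jacobi_hamfield_quadH[OF admissible_symmetric[OF assms(1)] assms(2)]
    by (intro arg_cong2[where f="(+)"] refl matvec_cong admissible_matvec_transp_Amat[OF assms(1)])
  also have "\<dots> = matvec (2*n) (transp (Amat n)) (matvec (2*n) (Jmat n w) (matvec (2*n) HH x)) i
      + matvec (2*n) (transp (Amat n)) (matvec (2*n) (Jmat n x) (matvec (2*n) HH w)) i"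
    by (simp only: Jmat_Amat_commute[OF assms(2,3)] Jmat_transp_Amat[OF assms(2,3)])
  also have "\<dots> = matvec (2*n) (transp (Amat n)) (matvec (2*n) (jacobi (hamfield n (quadH (2*n) HH)) x) w) i"
    unfolding matvec_add[symmetric]
    by (intro matvec_cong) (simp add: jacobi_hamfield_quadH[OF admissible_symmetric[OF assms(1)] assms(2)])
  finally show ?thesis .
qed

lemma intertwined_commute:
  assumes F1: "\<And>w i. i < m \<Longrightarrow> matvec m F1 w i = matvec m T (matvec m F0 w) i"
    and F0T: "\<And>w i. i < m \<Longrightarrow> matvec m F0 (matvec m T w) i = matvec m T (matvec m F0 w) i"
    and "i < m"
  shows "matvec m F0 (matvec m T v) i = matvec m F1 v i"
    and "k < m \<Longrightarrow> matmul m F0 F1 i k = matmul m F1 F0 i k"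
proof -
  show "matvec m F0 (matvec m T v) i = matvec m F1 v i"
    using F1 F0T \<open>i < m\<close> by simp
  assume "k < m"
  let ?e = "\<lambda>l. if l = k then 1 else 0"
  have "matmul m F0 F1 i k = matvec m F0 (matvec m F1 ?e) i"
    unfolding matmul_eq_matvec_column matvec_unit_vector[OF \<open>k < m\<close>] ..
  also have "\<dots> = matvec m F0 (matvec m T (matvec m F0 ?e)) i"
    by (intro matvec_cong F1)
  also have "\<dots> = matvec m F1 (matvec m F0 ?e) i"
    using F1 F0T \<open>i < m\<close> by simp
  also have "\<dots> = matmul m F1 F0 i k"
    unfolding matmul_eq_matvec_column matvec_unit_vector[OF \<open>k < m\<close>] ..
  finally show "matmul m F0 F1 i k = matmul m F1 F0 i k" .
qed

theorem mainTheorem14: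
  fixes n :: nat and HH :: "nat \<Rightarrow> nat \<Rightarrow> real" and x :: "nat \<Rightarrow> real"
  assumes "n \<ge> 2"
    and "admissible n HH"
  defines "H0 \<equiv> quadH (2*n) HH"
    and "H1 \<equiv> quadH (2*n) (matmul (2*n) (Amat n) HH)"
  defines "f0 \<equiv> hamfield n H0"
    and "f1 \<equiv> hamfield n H1"
  shows "(\<forall>i<2*n. matvec (2*n) (jacobi f0 x) (f1 x) i = matvec (2*n) (jacobi f1 x) (f0 x) i)
     \<and> (\<forall>i<2*n. \<forall>k<2*n.
           matmul (2*n) (jacobi f0 x) (jacobi f1 x) i k = matmul (2*n) (jacobi f1 x) (jacobi f0 x) i k)"
proof -
  have n: "0 < n" using assms(1) by simp
  note commute = intertwined_commute[of "2*n" "jacobi f1 x" "transp (Amat n)" "jacobi f0 x"]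
  have intertwined:
    "\<And>w i. i < 2*n \<Longrightarrow> matvec (2*n) (jacobi f1 x) w i = matvec (2*n) (transp (Amat n)) (matvec (2*n) (jacobi f0 x) w) i"
    "\<And>w i. i < 2*n \<Longrightarrow> matvec (2*n) (jacobi f0 x) (matvec (2*n) (transp (Amat n)) w) i
                        = matvec (2*n) (transp (Amat n)) (matvec (2*n) (jacobi f0 x) w) i"
    unfolding f0_def f1_def H0_def H1_def
    using jacobi_hamfield_shift jacobi_hamfield_transp_Amat assms(2) n by blast+
  have "matvec (2*n) (jacobi f0 x) (f1 x) i = matvec (2*n) (jacobi f1 x) (f0 x) i" if "i < 2*n" for i
  proof -
    have "matvec (2*n) (jacobi f0 x) (f1 x) i = matvec (2*n) (jacobi f0 x) (matvec (2*n) (transp (Amat n)) (f0 x)) i"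
      unfolding f0_def f1_def H0_def H1_def by (intro matvec_cong hamfield_shift[OF assms(2) n])
    then show ?thesis using commute(1)[OF intertwined that] by simp
  qed
  then show ?thesis using commute(2)[OF intertwined] by blast
qed

end
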